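(* Let $\mathcal{D}$ be a symmetric $2$-$(56,11,2)$ design (biplane), and let $S$ be the set of all $(0,1)$-vectors of Hamming weight $12$ in $L^\perp$, where $L$ is the linear code over $GF(3)$ of length $56$ (coordinates indexed by the blocks of $\mathcal{D}$) spanned by the rows of the points-by-blocks incidence matrix of $\mathcal{D}$. Let $B$ be a block of $\mathcal{D}$ and $\mathcal{D}_B$ the residual design (a $2$-$(45,9,2)$ design with $55$ blocks, indexed by the blocks of $\mathcal{D}$ other than $B$). Let $S_B\subseteq S$ be the set of vectors in $S$ having entry $0$ in the coordinate indexed by $B$. If there exists a quasi-symmetric $2$-$(56,12,9)$ design $\hat{\mathcal{D}}$ with block intersection numbers $0$ and $3$ and a point $z$ of $\hat{\mathcal{D}}$ such that the derived design $\hat{\mathcal{D}}^z$ is isomorphic to the dual design $(\mathcal{D}_B)^*$ (whose points are the $55$ blocks of $\mathcal{D}$ other than $B$), then $S_B$ contains a set of $165$ vectors whose restrictions to the $55$ coordinates other than $B$ are the incidence vectors of the blocks of a $1$-$(55,12,36)$ design (namely $\hat{\mathcal{D}}_z$, transported via this isomorphism) in which any two distinct blocks are either disjoint or meet in exactly $3$ points.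
   Context: A $t$-$(v,k,\lambda)$ design is a pair $(X,\mathcal{B})$ with $|X|=v$ and a collection $\mathcal{B}$ of $k$-subsets (blocks) such that each $t$-subset of points lies in exactly $\lambda$ blocks; symmetric means the number of blocks is $v$, and a biplane is a symmetric design with $\lambda=2$. A $2$-design is quasi-symmetric with intersection numbers $x<y$ if any two distinct blocks meet in exactly $x$ or $y$ points. For a block $B$, the residual design $\mathcal{D}_B$ has point set $X\setminus B$ and blocks $B_j\setminus B$ ($B_j\ne B$). For a point $z$, the derived design $\hat{\mathcal{D}}^z$ has points $X\setminus\{z\}$ and blocks $\{C\setminus\{z\}: z\in C\}$, and the residual design $\hat{\mathcal{D}}_z$ has points $X\setminus\{z\}$ and blocks $\{C: z\notin C\}$. The dual design swaps the roles of points and blocks, keeping incidence. Code duals are with respect to the standard inner product over $GF(3)$. *)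

theory Defs
  imports Main "HOL-Library.Numeral_Type"
begin

definition t_design :: "nat \<Rightarrow> nat \<Rightarrow> nat \<Rightarrow> nat \<Rightarrow> 'a set \<Rightarrow> 'a set set \<Rightarrow> bool" where
  "t_design t v k lam X Bs \<longleftrightarrow> finite X \<and> card X = v \<and>
     (\<forall>C\<in>Bs. C \<subseteq> X \<and> card C = k) \<and>
     (\<forall>T. T \<subseteq> X \<and> card T = t \<longrightarrow> card {C\<in>Bs. T \<subseteq> C} = lam)"

definition symmetric_design :: "nat \<Rightarrow> nat \<Rightarrow> nat \<Rightarrow> 'a set \<Rightarrow> 'a set set \<Rightarrow> bool" where
  "symmetric_design v k lam X Bs \<longleftrightarrow> t_design 2 v k lam X Bs \<and> card Bs = v"

definition quasi_symmetric :: "nat \<Rightarrow> nat \<Rightarrow> 'a set set \<Rightarrow> bool" where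
  "quasi_symmetric x y Bs \<longleftrightarrow>
     (\<forall>C1\<in>Bs. \<forall>C2\<in>Bs. C1 \<noteq> C2 \<longrightarrow> card (C1 \<inter> C2) = x \<or> card (C1 \<inter> C2) = y)"

definition dual_residual_blocks :: "'a set \<Rightarrow> 'a set set \<Rightarrow> 'a set \<Rightarrow> 'a set set set" where
  "dual_residual_blocks X Bs B = (\<lambda>x. {C \<in> Bs - {B}. x \<in> C - B}) ` (X - B)"

definition derived_blocks :: "'b set set \<Rightarrow> 'b \<Rightarrow> 'b set set" where
  "derived_blocks Bs z = (\<lambda>C. C - {z}) ` {C \<in> Bs. z \<in> C}"

definition pt_residual_blocks :: "'b set set \<Rightarrow> 'b \<Rightarrow> 'b set set" where
  "pt_residual_blocks Bs z = {C \<in> Bs. z \<notin> C}"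

text \<open>Vectors over GF(3) (the type 3) with coordinates indexed by the blocks Bs.\<close>
definition vecs :: "'a set set \<Rightarrow> ('a set \<Rightarrow> 3) set" where
  "vecs Bs = {v. \<forall>C. C \<notin> Bs \<longrightarrow> v C = 0}"

definition code_L :: "'a set \<Rightarrow> 'a set set \<Rightarrow> ('a set \<Rightarrow> 3) set" where
  "code_L X Bs = {w \<in> vecs Bs. \<exists>c :: 'a \<Rightarrow> 3.
      \<forall>C\<in>Bs. w C = (\<Sum>p\<in>X. c p * (if p \<in> C then 1 else 0))}"

definition dual_code :: "'a set set \<Rightarrow> ('a set \<Rightarrow> 3) set \<Rightarrow> ('a set \<Rightarrow> 3) set" where
  "dual_code Bs L = {v \<in> vecs Bs. \<forall>w\<in>L. (\<Sum>C\<in>Bs. v C * w C) = 0}"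

definition support :: "'a set set \<Rightarrow> ('a set \<Rightarrow> 3) \<Rightarrow> 'a set set" where
  "support Bs v = {C \<in> Bs. v C \<noteq> 0}"

definition S_set :: "'a set \<Rightarrow> 'a set set \<Rightarrow> ('a set \<Rightarrow> 3) set" where
  "S_set X Bs = {v \<in> dual_code Bs (code_L X Bs).
      (\<forall>C\<in>Bs. v C = 0 \<or> v C = 1) \<and> card (support Bs v) = 12}"

definition S_B :: "'a set \<Rightarrow> 'a set set \<Rightarrow> 'a set \<Rightarrow> ('a set \<Rightarrow> 3) set" where
  "S_B X Bs B = {v \<in> S_set X Bs. v B = 0}"

end

theory Submission
  imports Defs
begin

text \<open>Let \<open>C\<close> be a block of the quasi-symmetric design missing \<open>z\<close> and \<open>K = \<phi> ` C\<close>,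
  a set of 12 blocks of the biplane. Through the isomorphism with the derived design, a point
  \<open>q \<notin> B\<close> corresponds to a block \<open>E\<close> through \<open>z\<close>, and \<open>q\<close> lies in exactly
  \<open>|C \<inter> E| \<in> {0, 3}\<close> blocks of \<open>K\<close>. Since all intersection numbers of the biplane
  (11 and 2) are \<open>2 mod 3\<close> and \<open>|K| = 12\<close>, divisibility by 3 propagates to the points of
  \<open>B\<close>. Hence the 0/1 vector of \<open>K\<close> is orthogonal over GF(3) to every row of the incidence
  matrix. The 165 blocks of the residual design at \<open>z\<close> give the vectors, and the design
  and intersection properties are transported along \<open>\<phi>\<close>.\<close>

lemma sum_card_filter_swap:
  assumes "finite A" "finite B"
  shows "(\<Sum>a\<in>A. card {b\<in>B. R a b}) = (\<Sum>b\<in>B. card {a\<in>A. R a b})"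
proof -
  have card_as_sum: "card {y\<in>Y. P y} = (\<Sum>y\<in>Y. of_bool (P y))" if "finite Y" for Y :: "'c set" and P
    using that by (simp add: Collect_conj_eq Int_commute)
  show ?thesis
    using assms by (simp only: card_as_sum) (rule sum.swap)
qed

lemma sum_card_inter_square:
  assumes "finite A" "finite B"
  shows "(\<Sum>D\<in>A. card (B \<inter> D) ^ 2) = (\<Sum>p\<in>B. \<Sum>q\<in>B. card {D\<in>A. p \<in> D \<and> q \<in> D})"
proof -
  have "card (B \<inter> D) ^ 2 = card {x\<in>B \<times> B. fst x \<in> D \<and> snd x \<in> D}" for D
  proof -
    have "{x\<in>B \<times> B. fst x \<in> D \<and> snd x \<in> D} = (B \<inter> D) \<times> (B \<inter> D)" by auto
    then show ?thesis by (simp add: power2_eq_square card_cartesian_product)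
  qed
  then have "(\<Sum>D\<in>A. card (B \<inter> D) ^ 2) = (\<Sum>D\<in>A. card {x\<in>B \<times> B. fst x \<in> D \<and> snd x \<in> D})"
    by simp
  also have "\<dots> = (\<Sum>x\<in>B \<times> B. card {D\<in>A. fst x \<in> D \<and> snd x \<in> D})"
    using assms by (intro sum_card_filter_swap) auto
  also have "\<dots> = (\<Sum>p\<in>B. \<Sum>q\<in>B. card {D\<in>A. p \<in> D \<and> q \<in> D})"
    by (simp add: sum.cartesian_product case_prod_beta)
  finally show ?thesis .
qed

lemma t_designD:
  assumes "t_design t v k lam X Bs"
  shows "finite X" "card X = v" "finite Bs"
    and "C \<in> Bs \<Longrightarrow> C \<subseteq> X" "C \<in> Bs \<Longrightarrow> card C = k"
proof -
  show "finite X" using assms by (simp add: t_design_def)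
  moreover have "Bs \<subseteq> Pow X" using assms by (auto simp: t_design_def)
  ultimately show "finite Bs" by (meson finite_Pow_iff finite_subset)
qed (use assms in \<open>auto simp: t_design_def\<close>)

lemma t_design_2_pair:
  assumes "t_design 2 v k lam X Bs" "p \<in> X" "q \<in> X" "p \<noteq> q"
  shows "card {C\<in>Bs. p \<in> C \<and> q \<in> C} = lam"
proof -
  have "card {C\<in>Bs. {p, q} \<subseteq> C} = lam"
    using assms unfolding t_design_def by (elim conjE allE[of _ "{p, q}"]) auto
  then show ?thesis by simp
qed

lemma t_design_2_replication:
  assumes d: "t_design 2 v k lam X Bs" and p: "p \<in> X"
  shows "card {C\<in>Bs. p \<in> C} * (k - 1) = lam * (v - 1)"
proof -
  note fin = t_designD[OF d]
  have "lam * (v - 1) = (\<Sum>q\<in>X - {p}. lam)"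
    using fin(1,2) p by (simp add: card_Diff_singleton)
  also have "\<dots> = (\<Sum>q\<in>X - {p}. card {C\<in>Bs. p \<in> C \<and> q \<in> C})"
    using t_design_2_pair[OF d p] by (intro sum.cong) auto
  also have "\<dots> = (\<Sum>C\<in>Bs. card {q\<in>X - {p}. p \<in> C \<and> q \<in> C})"
    using fin by (intro sum_card_filter_swap) auto
  also have "\<dots> = (\<Sum>C\<in>Bs. if p \<in> C then k - 1 else 0)"
  proof (intro sum.cong refl)
    fix C assume C: "C \<in> Bs"
    have "{q\<in>X - {p}. p \<in> C \<and> q \<in> C} = (if p \<in> C then C - {p} else {})"
      using fin(4)[OF C] by auto
    then show "card {q\<in>X - {p}. p \<in> C \<and> q \<in> C} = (if p \<in> C then k - 1 else 0)"
      using fin(5)[OF C] by (simp add: card_Diff_singleton_if)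
  qed
  also have "\<dots> = card {C\<in>Bs. p \<in> C} * (k - 1)"
    using fin(3) by (simp add: sum.inter_filter[symmetric])
  finally show ?thesis by simp
qed

lemma t_design_card_blocks:
  assumes d: "t_design t v k lam X Bs" and r: "\<And>p. p \<in> X \<Longrightarrow> card {C\<in>Bs. p \<in> C} = r"
  shows "card Bs * k = v * r"
proof -
  note fin = t_designD[OF d]
  have "card Bs * k = (\<Sum>C\<in>Bs. card {p\<in>X. p \<in> C})"
    using fin by (simp add: Int_absorb1 Int_def[symmetric])
  also have "\<dots> = (\<Sum>p\<in>X. card {C\<in>Bs. p \<in> C})"
    using fin by (intro sum_card_filter_swap)
  also have "\<dots> = v * r" using r fin(2) by simp
  finally show ?thesis .
qed

lemma symmetric_design_replication:
  assumes sym: "symmetric_design v k lam X Bs" and k: "2 \<le> k" and p: "p \<in> X"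
  shows "card {C\<in>Bs. p \<in> C} = k"
proof -
  have d: "t_design 2 v k lam X Bs" and b: "card Bs = v"
    using sym by (auto simp: symmetric_design_def)
  define r where "r = card {C\<in>Bs. p \<in> C}"
  have "card {C\<in>Bs. q \<in> C} = r" if "q \<in> X" for q
  proof -
    have "card {C\<in>Bs. q \<in> C} * (k - 1) = r * (k - 1)"
      using t_design_2_replication[OF d that] t_design_2_replication[OF d p] by (simp add: r_def)
    then show ?thesis using k by simp
  qed
  then have "v * k = v * r"
    using t_design_card_blocks[OF d] b by simp
  moreover have "v > 0" using p t_designD(1,2)[OF d] by (auto simp: card_gt_0_iff)
  ultimately show ?thesis by (simp add: r_def)
qed

lemma zero_variance_imp_const:
  fixes a :: "'a \<Rightarrow> 'b :: linordered_idom"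
  assumes A: "finite A"
    and first: "(\<Sum>x\<in>A. a x) = of_nat (card A) * c"
    and second: "(\<Sum>x\<in>A. a x ^ 2) = of_nat (card A) * c ^ 2"
    and x: "x \<in> A"
  shows "a x = c"
proof -
  have "(a y - c) ^ 2 = a y ^ 2 - 2 * c * a y + c ^ 2" for y
    by (simp add: power2_eq_square algebra_simps)
  then have "(\<Sum>y\<in>A. (a y - c) ^ 2)
      = (\<Sum>y\<in>A. a y ^ 2) - 2 * c * (\<Sum>y\<in>A. a y) + of_nat (card A) * c ^ 2"
    by (simp add: sum.distrib sum_subtractf sum_distrib_left)
  also have "\<dots> = 0"
    unfolding first second by (simp add: power2_eq_square algebra_simps)
  finally have "\<forall>y\<in>A. (a y - c) ^ 2 = 0"
    using A by (subst (asm) sum_nonneg_eq_0_iff) auto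
  then show ?thesis using x by simp
qed

lemma symmetric_design_inter_moments:
  assumes sym: "symmetric_design v k lam X Bs" and k: "2 \<le> k" and B: "B \<in> Bs"
  shows "(\<Sum>C\<in>Bs - {B}. int (card (B \<inter> C))) = int k * (int k - 1)"
    and "(\<Sum>C\<in>Bs - {B}. int (card (B \<inter> C)) ^ 2) = int k * (int k - 1) * int lam"
proof -
  have d: "t_design 2 v k lam X Bs" using sym by (simp add: symmetric_design_def)
  note fin = t_designD[OF d]
  define A where "A = Bs - {B}"
  have fA: "finite A" using fin(3) by (simp add: A_def)
  have BX: "B \<subseteq> X" and cB: "card B = k" and fB: "finite B"
    using fin B by (auto intro: finite_subset)
  have other_blocks: "int (card {C\<in>A. P C}) = int (card {C\<in>Bs. P C}) - 1" if "P B" for P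
  proof -
    have "{C\<in>A. P C} = {C\<in>Bs. P C} - {B}" by (auto simp: A_def)
    then show ?thesis using card_Suc_Diff1[of "{C\<in>Bs. P C}" B] that B fin(3) by simp
  qed
  have pair_count: "int (card {C\<in>A. p \<in> C \<and> q \<in> C}) = int (if p = q then k else lam) - 1"
    if "p \<in> B" "q \<in> B" for p q
    using other_blocks[of "\<lambda>C. p \<in> C \<and> q \<in> C"] that BX
      symmetric_design_replication[OF sym k, of p] t_design_2_pair[OF d, of p q] by auto
  have point_count: "int (card {C\<in>A. p \<in> C}) = int k - 1" if "p \<in> B" for p
    using pair_count[OF that that] by simp
  have "(\<Sum>C\<in>A. int (card (B \<inter> C))) = int (\<Sum>C\<in>A. card {p\<in>B. p \<in> C})"
    by (simp add: Int_def)
  also have "\<dots> = (\<Sum>p\<in>B. int (card {C\<in>A. p \<in> C}))"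
    by (subst sum_card_filter_swap[OF fA fB]) simp
  also have "\<dots> = int k * (int k - 1)" using point_count cB by simp
  finally show "(\<Sum>C\<in>Bs - {B}. int (card (B \<inter> C))) = int k * (int k - 1)"
    by (simp add: A_def)
  have "(\<Sum>C\<in>A. int (card (B \<inter> C)) ^ 2) = (\<Sum>p\<in>B. \<Sum>q\<in>B. int (card {C\<in>A. p \<in> C \<and> q \<in> C}))"
    by (simp only: of_nat_power[symmetric] of_nat_sum[symmetric] sum_card_inter_square[OF fA fB])
  also have "\<dots> = (\<Sum>p\<in>B. \<Sum>q\<in>B. (int lam - 1) + (if q = p then int k - int lam else 0))"
    using pair_count by (intro sum.cong refl) auto
  also have "\<dots> = (\<Sum>p\<in>B. int k * (int lam - 1) + (int k - int lam))"
    using fB cB by (intro sum.cong refl) (simp add: sum.distrib)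
  also have "\<dots> = int k * (int k - 1) * int lam"
    using cB by (simp add: algebra_simps)
  finally show "(\<Sum>C\<in>Bs - {B}. int (card (B \<inter> C)) ^ 2) = int k * (int k - 1) * int lam"
    by (simp add: A_def)
qed

text \<open>Fisher's relation \<open>\<lambda>(v - 1) = k(k - 1)\<close> makes \<open>\<lambda>\<close> the mean of the
  intersection numbers with a fixed block, and the second moment shows their variance vanishes.\<close>
lemma symmetric_design_block_inter:
  assumes sym: "symmetric_design v k lam X Bs" and k: "2 \<le> k"
    and B: "B \<in> Bs" and D: "D \<in> Bs" "D \<noteq> B"
  shows "card (B \<inter> D) = lam"
proof -
  have d: "t_design 2 v k lam X Bs" and b: "card Bs = v"
    using sym by (auto simp: symmetric_design_def)
  note fin = t_designD[OF d]
  have "v > 0" using fin(3) B b by (auto simp: card_gt_0_iff)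
  then have card_other: "of_nat (card (Bs - {B})) = int v - 1"
    using fin(3) B b by (simp add: card_Diff_singleton of_nat_diff)
  have "B \<noteq> {}" using fin(5)[OF B] k by auto
  then obtain p where "p \<in> B" by blast
  then have "p \<in> X" using fin(4)[OF B] by blast
  then have "k * (k - 1) = lam * (v - 1)"
    using t_design_2_replication[OF d] symmetric_design_replication[OF sym k] by simp
  then have "int (k * (k - 1)) = int (lam * (v - 1))" by (rule arg_cong)
  then have fisher: "int k * (int k - 1) = int lam * (int v - 1)"
    using k \<open>v > 0\<close> by (simp add: of_nat_diff)
  have first: "(\<Sum>C\<in>Bs - {B}. int (card (B \<inter> C))) = of_nat (card (Bs - {B})) * int lam"
    unfolding symmetric_design_inter_moments(1)[OF sym k B] fisher card_other
    by (simp add: mult.commute)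
  have second: "(\<Sum>C\<in>Bs - {B}. int (card (B \<inter> C)) ^ 2) = of_nat (card (Bs - {B})) * int lam ^ 2"
    unfolding symmetric_design_inter_moments(2)[OF sym k B] fisher card_other
    by (simp add: power2_eq_square mult_ac)
  have "finite (Bs - {B})" "D \<in> Bs - {B}" using fin(3) D by auto
  from zero_variance_imp_const[OF this(1) first second this(2)] show ?thesis by simp
qed

lemma biplane_pair_block:
  assumes sym: "symmetric_design v k 2 X Bs" and k: "2 \<le> k"
    and B: "B \<in> Bs" and p: "p1 \<in> B" "p2 \<in> B" "p1 \<noteq> p2"
  obtains D where "D \<in> Bs" "D \<noteq> B" "B \<inter> D = {p1, p2}"
proof -
  have d: "t_design 2 v k 2 X Bs" using sym by (simp add: symmetric_design_def)
  note fin = t_designD[OF d]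
  have "card {C\<in>Bs. p1 \<in> C \<and> p2 \<in> C} = 2"
    using t_design_2_pair[OF d] p fin(4)[OF B] by auto
  then have "\<not> {C\<in>Bs. p1 \<in> C \<and> p2 \<in> C} \<subseteq> {B}"
    using card_mono[of "{B}" "{C\<in>Bs. p1 \<in> C \<and> p2 \<in> C}"] by auto
  then obtain D where D: "D \<in> Bs" "D \<noteq> B" "p1 \<in> D" "p2 \<in> D" by blast
  have "card (B \<inter> D) = 2" using symmetric_design_block_inter[OF sym k B D(1,2)] .
  moreover have "{p1, p2} \<subseteq> B \<inter> D" "card {p1, p2} = 2" using p D by auto
  moreover have "finite (B \<inter> D)" using fin(1,4) B by (meson finite_Int finite_subset)
  ultimately have "B \<inter> D = {p1, p2}" by (metis card_subset_eq)
  with D show thesis by (intro that)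
qed

lemma biplane_block_sum_mod3:
  assumes sym: "symmetric_design v k 2 X Bs" and k: "2 \<le> k" "k mod 3 = 2"
    and K: "K \<subseteq> Bs" "3 dvd card K" and D: "D \<in> Bs"
  shows "3 dvd (\<Sum>q\<in>D. card {D'\<in>K. q \<in> D'})"
proof -
  have d: "t_design 2 v k 2 X Bs" using sym by (simp add: symmetric_design_def)
  note fin = t_designD[OF d]
  have "(\<Sum>q\<in>D. card {D'\<in>K. q \<in> D'}) = (\<Sum>D'\<in>K. card (D \<inter> D'))"
    unfolding Int_def using fin(1) fin(4)[OF D] K(1) fin(3)
    by (intro sum_card_filter_swap) (auto intro: finite_subset)
  moreover have "card (D \<inter> D') mod 3 = 2" if "D' \<in> K" for D'
  proof -
    have "card (D \<inter> D') = k \<or> card (D \<inter> D') = 2"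
      using fin(5)[OF D] symmetric_design_block_inter[OF sym k(1) D, of D'] K(1) that by fastforce
    then show ?thesis using k(2) by auto
  qed
  then have "(\<Sum>D'\<in>K. card (D \<inter> D') mod 3) mod 3 = (card K * 2) mod 3" by simp
  ultimately have "(\<Sum>q\<in>D. card {D'\<in>K. q \<in> D'}) mod 3 = (card K * 2) mod 3"
    by (simp add: mod_sum_eq)
  also have "\<dots> = 0" using K(2) by auto
  finally show ?thesis by (simp add: dvd_eq_mod_eq_0)
qed

text \<open>A block \<open>D \<noteq> B\<close> through two points of \<open>B\<close> meets \<open>B\<close> in exactly these two points,
  so by \<open>biplane_block_sum_mod3\<close> their covering numbers add up to a multiple of 3; three
  points of \<open>B\<close> then force each covering number to be a multiple of 3.\<close>
lemma biplane_cover_mod3: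
  assumes sym: "symmetric_design v k 2 X Bs" and k: "3 \<le> k" "k mod 3 = 2"
    and B: "B \<in> Bs" and K: "K \<subseteq> Bs" "3 dvd card K"
    and outside: "\<And>q. q \<in> X - B \<Longrightarrow> 3 dvd card {D\<in>K. q \<in> D}"
    and p: "p \<in> X"
  shows "3 dvd card {D\<in>K. p \<in> D}"
proof -
  have d: "t_design 2 v k 2 X Bs" using sym by (simp add: symmetric_design_def)
  note fin = t_designD[OF d]
  have k2: "2 \<le> k" using k(1) by simp
  define n where "n q = card {D\<in>K. q \<in> D}" for q
  have pair_sum: "3 dvd n p1 + n p2" if p12: "p1 \<in> B" "p2 \<in> B" "p1 \<noteq> p2" for p1 p2
  proof -
    obtain D where D: "D \<in> Bs" "D \<noteq> B" "B \<inter> D = {p1, p2}"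
      by (rule biplane_pair_block[OF sym k2 B p12])
    have fD: "finite D" using fin(1) fin(4)[OF D(1)] by (rule rev_finite_subset)
    have "(\<Sum>q\<in>D. n q) = (\<Sum>q\<in>D \<inter> B. n q) + (\<Sum>q\<in>D - B. n q)"
      using fD by (rule sum.Int_Diff)
    also have "(\<Sum>q\<in>D \<inter> B. n q) = n p1 + n p2"
      using D(3) p12(3) by (simp add: Int_commute)
    finally have "(\<Sum>q\<in>D. n q) = n p1 + n p2 + (\<Sum>q\<in>D - B. n q)" .
    moreover have "3 dvd (\<Sum>q\<in>D - B. n q)"
      using outside fin(4)[OF D(1)] by (auto simp: n_def intro!: dvd_sum)
    moreover have "3 dvd (\<Sum>q\<in>D. n q)"
      unfolding n_def by (rule biplane_block_sum_mod3[OF sym k2 k(2) K D(1)])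
    ultimately show ?thesis by (simp add: dvd_add_left_iff)
  qed
  show ?thesis
  proof (cases "p \<in> B")
    case False
    then show ?thesis using outside p by simp
  next
    case True
    have "2 \<le> card (B - {p})" using fin(5)[OF B] True k(1) fin(1) fin(4)[OF B]
      by (simp add: card_Diff_singleton finite_subset)
    then obtain P where "P \<subseteq> B - {p}" "card P = 2" by (metis obtain_subset_with_card_n)
    then obtain p' p'' where "p' \<in> B" "p'' \<in> B" "p' \<noteq> p" "p'' \<noteq> p" "p' \<noteq> p''"
      by (auto simp: card_2_iff)
    then have "3 dvd n p + n p'" "3 dvd n p + n p''" "3 dvd n p' + n p''"
      using pair_sum True by auto
    then show ?thesis unfolding n_def by presburger
  qed
qed

lemma t_design_image:
  assumes d: "t_design t v k lam X Bs" and f: "inj_on f X"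
  shows "t_design t v k lam (f ` X) ((\<lambda>C. f ` C) ` Bs)"
proof -
  note fin = t_designD[OF d]
  have card_img: "card (f ` C) = card C" if "C \<subseteq> X" for C
    using card_image[OF inj_on_subset[OF f that]] .
  have inj_img: "inj_on (\<lambda>C. f ` C) Bs"
    using inj_on_subset[OF inj_on_image_Pow[OF f]] fin(4) by blast
  have blocks_through: "card {E\<in>(\<lambda>C. f ` C) ` Bs. T \<subseteq> E} = lam"
    if T: "T \<subseteq> f ` X" "card T = t" for T
  proof -
    obtain T' where T': "T' \<subseteq> X" "T = f ` T'" using T(1) by (auto simp: subset_image_iff)
    have "card T' = t" using T' T(2) card_img by simp
    then have lam: "card {C\<in>Bs. T' \<subseteq> C} = lam" using d T'(1) by (simp add: t_design_def)
    have "T \<subseteq> f ` C \<longleftrightarrow> T' \<subseteq> C" if "C \<in> Bs" for C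
      unfolding T'(2)
    proof
      assume "f ` T' \<subseteq> f ` C"
      then show "T' \<subseteq> C" using T'(1) fin(4)[OF that] inj_on_image_mem_iff[OF f] by blast
    qed (rule image_mono)
    then have "{E\<in>(\<lambda>C. f ` C) ` Bs. T \<subseteq> E} = (\<lambda>C. f ` C) ` {C\<in>Bs. T' \<subseteq> C}"
      by blast
    then show ?thesis using lam card_image[OF inj_on_subset[OF inj_img]] by simp
  qed
  have "finite (f ` X)" "card (f ` X) = v" using fin(1,2) card_image[OF f] by auto
  moreover have "\<forall>E\<in>(\<lambda>C. f ` C) ` Bs. E \<subseteq> f ` X \<and> card E = k"
    using fin(4,5) card_img by auto
  ultimately show ?thesis using blocks_through unfolding t_design_def by blast
qed

lemma quasi_symmetric_image:
  assumes f: "inj_on f X" and Bs: "Bs \<subseteq> Pow X" and qs: "quasi_symmetric x y Bs"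
  shows "quasi_symmetric x y ((\<lambda>C. f ` C) ` Bs)"
  unfolding quasi_symmetric_def
proof (intro ballI impI)
  fix E1 E2 assume "E1 \<in> (\<lambda>C. f ` C) ` Bs" "E2 \<in> (\<lambda>C. f ` C) ` Bs" "E1 \<noteq> E2"
  then obtain C1 C2 where C: "C1 \<in> Bs" "C2 \<in> Bs" "C1 \<noteq> C2" "E1 = f ` C1" "E2 = f ` C2" by blast
  have sub: "C1 \<subseteq> X" "C2 \<subseteq> X" using C(1,2) Bs by blast+
  then have "E1 \<inter> E2 = f ` (C1 \<inter> C2)" using inj_on_image_Int[OF f] C(4,5) by simp
  moreover have "C1 \<inter> C2 \<subseteq> X" using sub by blast
  ultimately have "card (E1 \<inter> E2) = card (C1 \<inter> C2)"
    using card_image[OF inj_on_subset[OF f]] by simp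
  then show "card (E1 \<inter> E2) = x \<or> card (E1 \<inter> E2) = y"
    using qs C(1-3) by (simp add: quasi_symmetric_def)
qed

lemma quasi_symmetric_subset:
  "Bs' \<subseteq> Bs \<Longrightarrow> quasi_symmetric x y Bs \<Longrightarrow> quasi_symmetric x y Bs'"
  unfolding quasi_symmetric_def by blast

lemma pt_residual_t_design:
  assumes d: "t_design 2 v k lam Y Bh" and z: "z \<in> Y"
    and r: "\<And>y. y \<in> Y \<Longrightarrow> card {C\<in>Bh. y \<in> C} = r"
  shows "t_design 1 (v - 1) k (r - lam) (Y - {z}) (pt_residual_blocks Bh z)"
proof -
  note fin = t_designD[OF d]
  have "card {C\<in>pt_residual_blocks Bh z. T \<subseteq> C} = r - lam"
    if T: "T \<subseteq> Y - {z}" "card T = 1" for T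
  proof -
    obtain y where y: "T = {y}" "y \<in> Y" "y \<noteq> z" using T by (auto simp: card_1_singleton_iff)
    have "{C\<in>pt_residual_blocks Bh z. T \<subseteq> C} = {C\<in>Bh. y \<in> C} - {C\<in>Bh. y \<in> C \<and> z \<in> C}"
      using y(1) by (auto simp: pt_residual_blocks_def)
    also have "card \<dots> = r - lam"
      using r[OF y(2)] t_design_2_pair[OF d y(2) z y(3)] fin(3) by (subst card_Diff_subset) auto
    finally show ?thesis .
  qed
  then show ?thesis
    using fin z by (auto simp: t_design_def pt_residual_blocks_def card_Diff_singleton)
qed

lemma card_pt_residual_blocks:
  assumes "finite Bh"
  shows "card (pt_residual_blocks Bh z) = card Bh - card {C\<in>Bh. z \<in> C}"
proof -
  have "pt_residual_blocks Bh z = Bh - {C\<in>Bh. z \<in> C}"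
    by (auto simp: pt_residual_blocks_def)
  then show ?thesis using assms by (simp add: card_Diff_subset)
qed

lemma pt_residual_image_t_design:
  assumes d: "t_design 2 v k lam Y Bh" and z: "z \<in> Y"
    and r: "\<And>y. y \<in> Y \<Longrightarrow> card {C\<in>Bh. y \<in> C} = r" and f: "inj_on f (Y - {z})"
  shows "t_design 1 (v - 1) k (r - lam) (f ` (Y - {z})) ((\<lambda>C. f ` C) ` pt_residual_blocks Bh z)"
    and "card ((\<lambda>C. f ` C) ` pt_residual_blocks Bh z) = card Bh - r"
proof -
  show "t_design 1 (v - 1) k (r - lam) (f ` (Y - {z})) ((\<lambda>C. f ` C) ` pt_residual_blocks Bh z)"
    using pt_residual_t_design[OF d z r] f by (rule t_design_image)
  have "pt_residual_blocks Bh z \<subseteq> Pow (Y - {z})"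
    using t_designD(4)[OF d] by (auto simp: pt_residual_blocks_def)
  then show "card ((\<lambda>C. f ` C) ` pt_residual_blocks Bh z) = card Bh - r"
    using card_image[OF inj_on_subset[OF inj_on_image_Pow[OF f]]] r[OF z]
      card_pt_residual_blocks[OF t_designD(3)[OF d]]
    by simp
qed

definition incidence_vec :: "'a set set \<Rightarrow> 'a set \<Rightarrow> 3" where
  "incidence_vec K D = of_bool (D \<in> K)"

lemma support_incidence_vec: "K \<subseteq> A \<Longrightarrow> support A (incidence_vec K) = K"
  by (auto simp: support_def incidence_vec_def)

lemma incidence_vec_image:
  assumes "\<And>E. E \<in> Es \<Longrightarrow> E \<subseteq> A"
  shows "support A ` incidence_vec ` Es = Es" "inj_on (support A) (incidence_vec ` Es)"
    and "card (incidence_vec ` Es) = card Es"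
proof -
  have supp: "support A (incidence_vec E) = E" if "E \<in> Es" for E
    using support_incidence_vec assms that by blast
  then show "support A ` incidence_vec ` Es = Es"
    unfolding image_image by simp
  show "inj_on (support A) (incidence_vec ` Es)"
    using supp by (auto simp: inj_on_def)
  show "card (incidence_vec ` Es) = card Es"
    using supp by (intro card_image inj_on_inverseI)
qed

lemma incidence_vec_in_dual_code:
  assumes Bs: "finite Bs" "K \<subseteq> Bs" and cover: "\<And>p. p \<in> X \<Longrightarrow> 3 dvd card {D\<in>K. p \<in> D}"
  shows "incidence_vec K \<in> dual_code Bs (code_L X Bs)"
proof -
  have "(\<Sum>D\<in>Bs. incidence_vec K D * w D) = 0" if w: "w \<in> code_L X Bs" for w
  proof -
    obtain c where c: "\<And>D. D \<in> Bs \<Longrightarrow> w D = (\<Sum>p\<in>X. c p * of_bool (p \<in> D))"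
      using w by (auto simp: code_L_def of_bool_def)
    have fK: "finite K" using Bs by (rule finite_subset[rotated])
    have "(\<Sum>D\<in>Bs. incidence_vec K D * w D) = (\<Sum>D\<in>K. w D)"
      using Bs by (simp add: incidence_vec_def mult.commute Int_absorb1 Collect_mem_eq)
    also have "\<dots> = (\<Sum>p\<in>X. c p * (\<Sum>D\<in>K. of_bool (p \<in> D)))"
      using c Bs(2) by (simp add: sum_distrib_left subset_iff) (rule sum.swap)
    also have "\<dots> = (\<Sum>p\<in>X. c p * of_nat (card {D\<in>K. p \<in> D}))"
      using fK by (simp add: Collect_conj_eq Collect_mem_eq)
    also have "\<dots> = 0"
    proof (intro sum.neutral ballI)
      fix p assume "p \<in> X"
      then have "of_nat (card {D\<in>K. p \<in> D}) = (0 :: 3)"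
        using cover by (simp add: of_nat_eq_0_iff_char_dvd)
      then show "c p * of_nat (card {D\<in>K. p \<in> D}) = 0" by simp
    qed
    finally show ?thesis .
  qed
  moreover have "incidence_vec K \<in> vecs Bs"
    using Bs(2) by (auto simp: vecs_def incidence_vec_def)
  ultimately show ?thesis by (simp add: dual_code_def)
qed

lemma incidence_vec_in_S_B:
  assumes "finite Bs" "K \<subseteq> Bs - {B}" "card K = 12"
    and "\<And>p. p \<in> X \<Longrightarrow> 3 dvd card {D\<in>K. p \<in> D}"
  shows "incidence_vec K \<in> S_B X Bs B"
proof -
  have "support Bs (incidence_vec K) = K" by (rule support_incidence_vec) (use assms(2) in auto)
  moreover have "incidence_vec K \<in> dual_code Bs (code_L X Bs)"
    using assms by (auto intro: incidence_vec_in_dual_code)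
  ultimately show ?thesis
    using assms(2,3) by (auto simp: S_B_def S_set_def incidence_vec_def)
qed

lemma dual_residual_block_derived:
  fixes \<phi> :: "'b \<Rightarrow> 'a set"
  assumes iso_blocks: "(\<lambda>D. \<phi> ` D) ` derived_blocks Bh z = dual_residual_blocks X Bs B"
    and q: "q \<in> X - B"
  obtains E where "E \<in> Bh" "z \<in> E" "{D\<in>Bs - {B}. q \<in> D} = \<phi> ` (E - {z})"
proof -
  have "{D\<in>Bs - {B}. q \<in> D - B} \<in> dual_residual_blocks X Bs B"
    using q unfolding dual_residual_blocks_def by blast
  then obtain E where "E \<in> Bh" "z \<in> E" "{D\<in>Bs - {B}. q \<in> D - B} = \<phi> ` (E - {z})"
    unfolding iso_blocks[symmetric] derived_blocks_def by auto
  moreover have "{D\<in>Bs - {B}. q \<in> D - B} = {D\<in>Bs - {B}. q \<in> D}" using q by auto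
  ultimately show thesis using that by simp
qed

lemma residual_block_image_cover_mod3:
  fixes \<phi> :: "'b \<Rightarrow> 'a set"
  assumes d: "t_design t v k lam Y Bh" and qs: "quasi_symmetric 0 3 Bh"
    and iso_bij: "bij_betw \<phi> (Y - {z}) (Bs - {B})"
    and iso_blocks: "(\<lambda>D. \<phi> ` D) ` derived_blocks Bh z = dual_residual_blocks X Bs B"
    and C: "C \<in> Bh" "z \<notin> C" and q: "q \<in> X - B"
  shows "3 dvd card {D\<in>\<phi> ` C. q \<in> D}"
proof -
  obtain E where E: "E \<in> Bh" "z \<in> E" "{D\<in>Bs - {B}. q \<in> D} = \<phi> ` (E - {z})"
    using dual_residual_block_derived[OF iso_blocks q] .
  have inj: "inj_on \<phi> (Y - {z})" using iso_bij by (simp add: bij_betw_def)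
  have CY: "C \<subseteq> Y - {z}" and EY: "E - {z} \<subseteq> Y - {z}"
    using t_designD(4)[OF d C(1)] t_designD(4)[OF d E(1)] C(2) by auto
  have "\<phi> ` C \<subseteq> Bs - {B}" using image_mono[OF CY, of \<phi>] iso_bij by (simp add: bij_betw_def)
  then have "{D\<in>\<phi> ` C. q \<in> D} = \<phi> ` C \<inter> \<phi> ` (E - {z})" using E(3) by blast
  also have "\<dots> = \<phi> ` (C \<inter> (E - {z}))" using inj_on_image_Int[OF inj CY EY] by simp
  also have "C \<inter> (E - {z}) = C \<inter> E" using C(2) by blast
  finally have "{D\<in>\<phi> ` C. q \<in> D} = \<phi> ` (C \<inter> E)" .
  moreover have "inj_on \<phi> (C \<inter> E)" using CY by (blast intro: inj_on_subset[OF inj])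
  moreover have "C \<noteq> E" using C(2) E(2) by blast
  with qs C(1) E(1) have "card (C \<inter> E) = 0 \<or> card (C \<inter> E) = 3"
    by (simp add: quasi_symmetric_def)
  ultimately show ?thesis by (auto simp: card_image)
qed

lemma residual_block_image_in_S_B:
  fixes \<phi> :: "'b \<Rightarrow> 'a set"
  assumes biplane: "symmetric_design 56 11 2 X Bs" and B: "B \<in> Bs"
    and d: "t_design t v 12 lam Y Bh" and qs: "quasi_symmetric 0 3 Bh"
    and iso_bij: "bij_betw \<phi> (Y - {z}) (Bs - {B})"
    and iso_blocks: "(\<lambda>D. \<phi> ` D) ` derived_blocks Bh z = dual_residual_blocks X Bs B"
    and C: "C \<in> Bh" "z \<notin> C"
  shows "incidence_vec (\<phi> ` C) \<in> S_B X Bs B"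
proof -
  have CY: "C \<subseteq> Y - {z}" using t_designD(4)[OF d C(1)] C(2) by auto
  then have K: "\<phi> ` C \<subseteq> Bs - {B}" using image_mono[OF CY, of \<phi>] iso_bij by (simp add: bij_betw_def)
  have card_K: "card (\<phi> ` C) = 12"
    using card_image[OF inj_on_subset[OF bij_betw_imp_inj_on[OF iso_bij] CY]] t_designD(5)[OF d C(1)]
    by simp
  have cover: "3 dvd card {D\<in>\<phi> ` C. p \<in> D}" if "p \<in> X" for p
    using biplane_cover_mod3[OF biplane _ _ B _ _
        residual_block_image_cover_mod3[OF d qs iso_bij iso_blocks C] that] K card_K
    by auto
  have "finite Bs" using biplane by (auto simp: symmetric_design_def dest: t_designD(3))
  then show ?thesis using K card_K cover by (rule incidence_vec_in_S_B)
qed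

theorem lemma3:
  fixes X :: "'a set" and Bs :: "'a set set" and B :: "'a set"
    and Y :: "'b set" and Bh :: "'b set set" and z :: 'b
    and \<phi> :: "'b \<Rightarrow> 'a set"
  assumes biplane: "symmetric_design 56 11 2 X Bs"
    and B: "B \<in> Bs"
    and qs_design: "t_design 2 56 12 9 Y Bh"
    and qs: "quasi_symmetric 0 3 Bh"
    and z: "z \<in> Y"
    and iso_bij: "bij_betw \<phi> (Y - {z}) (Bs - {B})"
    and iso_blocks: "(\<lambda>D. \<phi> ` D) ` derived_blocks Bh z = dual_residual_blocks X Bs B"
  shows "\<exists>T \<subseteq> S_B X Bs B. card T = 165 \<and>
           inj_on (support (Bs - {B})) T \<and>
           support (Bs - {B}) ` T = (\<lambda>D. \<phi> ` D) ` pt_residual_blocks Bh z \<and>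
           t_design 1 55 12 36 (Bs - {B}) (support (Bs - {B}) ` T) \<and>
           (\<forall>D1 \<in> support (Bs - {B}) ` T. \<forall>D2 \<in> support (Bs - {B}) ` T.
              D1 \<noteq> D2 \<longrightarrow> card (D1 \<inter> D2) = 0 \<or> card (D1 \<inter> D2) = 3)"
proof -
  have inj: "inj_on \<phi> (Y - {z})" and onto: "\<phi> ` (Y - {z}) = Bs - {B}"
    using iso_bij by (auto simp: bij_betw_def)
  have rep: "card {C\<in>Bh. y \<in> C} = 45" if "y \<in> Y" for y
    using t_design_2_replication[OF qs_design that] by simp
  have "card Bh = 210" using t_design_card_blocks[OF qs_design rep] by simp
  define Es where "Es = (\<lambda>C. \<phi> ` C) ` pt_residual_blocks Bh z"
  have design: "t_design 1 55 12 36 (Bs - {B}) Es" and card_Es: "card Es = 165"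
    using pt_residual_image_t_design[OF qs_design z rep inj] onto \<open>card Bh = 210\<close>
    by (simp_all add: Es_def)
  have qs_Es: "quasi_symmetric 0 3 Es"
    unfolding Es_def using t_designD(4)[OF qs_design]
    by (intro quasi_symmetric_image[OF inj] quasi_symmetric_subset[OF _ qs])
      (auto simp: pt_residual_blocks_def)
  have "incidence_vec ` Es \<subseteq> S_B X Bs B"
    using residual_block_image_in_S_B[OF biplane B qs_design qs iso_bij iso_blocks]
    by (auto simp: Es_def pt_residual_blocks_def)
  moreover note incidence_vec_image[of Es "Bs - {B}", OF t_designD(4)[OF design]]
  ultimately show ?thesis
    unfolding Es_def[symmetric] using design qs_Es card_Es
    by (intro exI[of _ "incidence_vec ` Es"]) (simp add: quasi_symmetric_def)
qed

end
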